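(* Let $a,M$ be positive integers and let $\lambda=\lambda_1/\lambda_2$ with $\lambda_1,\lambda_2$ coprime integers, $\lambda_2\ge1$. Call a positive integer $L$ feasible (for $a,M,\lambda$) if $a\mid L$, $M\mid L$, $\frac{L}{a}\lambda\in\mathbb{Z}$ and $\frac{L}{M}\lambda\in\mathbb{Z}$. Then the minimal feasible $L$ is $L_{\min}=\lambda_2\,\mathrm{lcm}(a,M)$, and every feasible $L$ is a multiple of $L_{\min}$.
   Context: Interpretation: $L$ is the signal length, $a$ the time shift, $M$ the number of frequency channels (frequency shift $b=L/M$), and $\lambda$ the relative shear, so that the shear parameter is $s=\lambda b$; the conditions in the definition of feasibility are exactly those for these parameters to define a lattice (subgroup) of $\mathbb{Z}_L^2$ generated by $(a,s)^T$ and $(0,b)^T$ in normal form. *)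

theory Defs
  imports Complex_Main
begin

definition feasible :: "nat \<Rightarrow> nat \<Rightarrow> rat \<Rightarrow> nat \<Rightarrow> bool" where
  "feasible a M lam L \<longleftrightarrow>
     L > 0 \<and> a dvd L \<and> M dvd L \<and>
     (of_nat L / of_nat a) * lam \<in> \<int> \<and> (of_nat L / of_nat M) * lam \<in> \<int>"

end

theory Submission
  imports Defs
begin

text \<open>Write \<open>\<lambda> = \<lambda>\<^sub>1/\<lambda>\<^sub>2\<close> in lowest terms. Since \<open>a\<close> divides \<open>L\<close>, the number
  \<open>(L/a)\<lambda>\<close> is an integer iff \<open>\<lambda>\<^sub>2\<close> divides the integer \<open>L/a\<close>, i.e. iff
  \<open>a\<lambda>\<^sub>2\<close> divides \<open>L\<close>; likewise for \<open>M\<close>. So \<open>L\<close> is feasible iff it is a positive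
  common multiple of \<open>a\<lambda>\<^sub>2\<close> and \<open>M\<lambda>\<^sub>2\<close>, i.e. a positive multiple of
  \<open>lcm(a\<lambda>\<^sub>2, M\<lambda>\<^sub>2) = \<lambda>\<^sub>2 lcm(a, M)\<close>.\<close>

lemma of_int_mult_fraction_in_Ints_iff:
  fixes p q k :: int
  assumes "coprime p q" and "q \<noteq> 0"
  shows "(of_int k * (of_int p / of_int q) :: 'a :: field_char_0) \<in> \<int> \<longleftrightarrow> q dvd k"
proof
  assume "(of_int k * (of_int p / of_int q) :: 'a) \<in> \<int>"
  then obtain m where "(of_int k * (of_int p / of_int q) :: 'a) = of_int m"
    by (auto elim: Ints_cases)
  then have "(of_int (k * p) :: 'a) = of_int (m * q)"
    using assms(2) by (simp add: field_simps)
  then have "q dvd k * p"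
    by (metis of_int_eq_iff dvd_triv_right)
  then show "q dvd k"
    using assms(1) by (metis coprime_commute coprime_dvd_mult_left_iff)
next
  assume "q dvd k"
  then obtain j where "k = q * j" ..
  then have "(of_int k * (of_int p / of_int q) :: 'a) = of_int (j * p)"
    using assms(2) by (simp add: field_simps)
  then show "(of_int k * (of_int p / of_int q) :: 'a) \<in> \<int>" by simp
qed

lemma quotient_mult_fraction_in_Ints_iff:
  fixes p q :: int and a L :: nat
  assumes "coprime p q" and "q \<ge> 1" and "a > 0" and "a dvd L"
  shows "((of_nat L / of_nat a) * (of_int p / of_int q) :: 'a :: field_char_0) \<in> \<int>
     \<longleftrightarrow> a * nat q dvd L"
proof -
  have quotient: "(of_nat L / of_nat a :: 'a) = of_int (int (L div a))"
    using assms(3,4) by (auto elim!: dvdE)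
  have "q dvd int (L div a) \<longleftrightarrow> nat q dvd L div a"
    using assms(2) by (metis int_dvd_int_iff nat_0_le order_trans zero_le_one)
  also have "\<dots> \<longleftrightarrow> a * nat q dvd L"
    using assms(3,4) by (simp add: dvd_div_iff_mult mult.commute)
  finally show ?thesis
    unfolding quotient
    using of_int_mult_fraction_in_Ints_iff[OF assms(1), of "int (L div a)", where 'a='a] assms(2)
    by simp
qed

lemma feasible_iff_dvd:
  fixes a M :: nat and p q :: int
  assumes "a > 0" and "M > 0" and "coprime p q" and "q \<ge> 1"
  shows "feasible a M (of_int p / of_int q) L \<longleftrightarrow> L > 0 \<and> nat q * lcm a M dvd L"
proof -
  have "feasible a M (of_int p / of_int q) L \<longleftrightarrow> L > 0 \<and> a * nat q dvd L \<and> M * nat q dvd L"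
    unfolding feasible_def
    using quotient_mult_fraction_in_Ints_iff[OF assms(3,4) assms(1), of L]
      quotient_mult_fraction_in_Ints_iff[OF assms(3,4) assms(2), of L]
    by (auto intro: dvd_mult_left)
  also have "\<dots> \<longleftrightarrow> L > 0 \<and> lcm (nat q * a) (nat q * M) dvd L"
    by (simp add: mult.commute)
  also have "lcm (nat q * a) (nat q * M) = nat q * lcm a M"
    by (simp add: lcm_mult_left)
  finally show ?thesis .
qed

theorem proposition3p7:
  fixes a M :: nat and lam1 lam2 :: int
  assumes "a > 0" and "M > 0"
    and "coprime lam1 lam2" and "lam2 \<ge> 1"
  defines "lam \<equiv> (of_int lam1 / of_int lam2 :: rat)"
  shows "feasible a M lam (nat lam2 * lcm a M)
       \<and> (LEAST L. feasible a M lam L) = nat lam2 * lcm a M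
       \<and> (\<forall>L. feasible a M lam L \<longrightarrow> (nat lam2 * lcm a M) dvd L)"
proof -
  define N where "N = nat lam2 * lcm a M"
  have feasible_iff: "feasible a M lam L \<longleftrightarrow> L > 0 \<and> N dvd L" for L
    unfolding lam_def N_def using feasible_iff_dvd[OF assms(1-4)] .
  have "N > 0"
    using assms by (simp add: N_def lcm_pos_nat)
  then have feasible_N: "feasible a M lam N"
    by (simp add: feasible_iff)
  moreover have "(LEAST L. feasible a M lam L) = N"
    using feasible_N by (intro Least_equality) (auto simp: feasible_iff dvd_imp_le)
  moreover have "\<forall>L. feasible a M lam L \<longrightarrow> N dvd L"
    by (simp add: feasible_iff)
  ultimately show ?thesis
    unfolding N_def by blast
qed

end
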